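(* Let $n\ge2$, $l\ge1$, $a_1,\ldots,a_l\ge2$ be integers with $a_1+\cdots+a_l=n$. The power series $I_p(q)$, $p=0,1,\ldots,n-1$, satisfy \begin{align*} &I_p(q)=1\quad\text{for } p=n-l+1,\ldots,n-1,\\ &I_p(q)=I_{n-l-p}(q)\quad\text{for } p=0,1,\ldots,n-l,\\ &I_0(q)I_1(q)\cdots I_{n-l}(q)=(1-\mathbf a^{\mathbf a}q)^{-1},\\ &I_0(q)^{n-l}I_1(q)^{n-l-1}\cdots I_{n-l-1}(q)^1I_{n-l}(q)^0=(1-\mathbf a^{\mathbf a}q)^{-(n-l)/2}. \end{align*}
   Context: $\mathbf a^{\mathbf a}=\prod_ka_k^{a_k}$. Let $\mathcal P\subset1+q\,\mathbb Q(w)[[q]]$ be the power series in $q$ with constant term $1$ whose coefficients are rational functions of $w$ regular at $w=0$, and $\mathbf M:\mathcal P\to\mathcal P$, $\mathbf MF(w,q)=\left\{1+\frac{q}{w}\frac{d}{dq}\right\}\frac{F(w,q)}{F(0,q)}$. With $\tilde{\mathcal F}(w,q)=\sum_{d\ge0}q^d\frac{\prod_{k=1}^l\prod_{r=1}^{a_kd}(a_kw+r)}{\prod_{r=1}^d(w+r)^n}$, define $I_p(q)=\mathbf M^p\tilde{\mathcal F}(0,q)$ for $p=0,\ldots,n-1$. *)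

theory Defs
  imports "HOL-Computational_Algebra.Formal_Power_Series"
begin

text \<open>Power series in q whose coefficients are (expansions at w = 0 of) functions of w
  regular at w = 0 are modelled as elements of Q[[w]][[q]], i.e. type rat fps fps:
  the outer variable is q, the inner variable is w.\<close>

definition liftq :: "rat fps \<Rightarrow> rat fps fps" where
  "liftq f = Abs_fps (\<lambda>d. fps_const (fps_nth f d))"

definition at_w0 :: "rat fps fps \<Rightarrow> rat fps" where
  "at_w0 F = Abs_fps (\<lambda>d. fps_nth (fps_nth F d) 0)"

text \<open>The operator M F = (1 + (q/w) d/dq) (F(w,q) / F(0,q)).
  Division by w is fps_shift 1 on each coefficient in w (exact on the class P,
  since q d/dq of F/F(0,q) vanishes at w = 0).\<close>
definition opM :: "rat fps fps \<Rightarrow> rat fps fps" where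
  "opM F = (let G = F * liftq (inverse (at_w0 F))
            in G + Abs_fps (\<lambda>d. fps_shift 1 (of_nat d * fps_nth G d)))"

definition tildeF :: "nat \<Rightarrow> (nat \<Rightarrow> nat) \<Rightarrow> nat \<Rightarrow> rat fps fps" where
  "tildeF l a n = Abs_fps (\<lambda>d.
      (\<Prod>k=1..l. \<Prod>r=1..a k * d. fps_const (of_nat (a k)) * fps_X + fps_const (of_nat r))
      * inverse (\<Prod>r=1..d. (fps_X + fps_const (of_nat r)) ^ n))"

definition Iser :: "nat \<Rightarrow> (nat \<Rightarrow> nat) \<Rightarrow> nat \<Rightarrow> nat \<Rightarrow> rat fps" where
  "Iser l a n p = at_w0 ((opM ^^ p) (tildeF l a n))"

definition aa :: "nat \<Rightarrow> (nat \<Rightarrow> nat) \<Rightarrow> nat" where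
  "aa l a = (\<Prod>k=1..l. a k ^ a k)"

end

theory Submission
  imports Defs
begin

text \<open>
  Write \<theta> = w + q d/dq and G_p = M^p F / I_p. Since w M^{p+1} F = \<theta> G_p, the operator
  I_p^{-1} \<theta> I_{p-1}^{-1} \<theta> \<dots> \<theta> I_0^{-1} maps F to w^p G_p. On the other hand F satisfies
  L F = w^k for the hypergeometric operator L = \<theta>^k - A q \<Prod>_c (\<theta> + c) of order k = n - l,
  where A = a^a and c runs over the fractions r/a_j with 0 < r < a_j. An operator of order below k
  cannot map F into w^k Q[[w]][[q]] unless it vanishes; comparing the two operators of order k
  therefore shows that L is the factored operator, that \<Prod> I_p^{-1} = 1 - A q and that G_k = 1,
  whence I_p = 1 for p > k.

  The shifts c are symmetric under c \<mapsto> 1 - c, which makes L self-adjoint up to sign for the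
  pairing (f, g) \<mapsto> [q^N] f g. The adjoint of a factorisation is the reversed factorisation, and
  factorisations with I_p(0) = 1 are unique, so I_{k-p} = I_p. Consequently the square of
  \<Prod> I_p^{k-p} is \<Prod> I_p^k = (1 - A q)^{-k}, and the last identity follows by taking the
  square root with constant term 1.
\<close>

unbundle fps_syntax

section \<open>The Euler operator \<theta> = w + q d/dq\<close>

lemma fps_const_sum: "fps_const (sum f S) = (\<Sum>i\<in>S. fps_const (f i))"
  by (rule fps_ext) (simp add: fps_sum_nth)

lemma fps_const_prod: "fps_const (prod f S) = (\<Prod>i\<in>S. fps_const (f i))"
  by (induction S rule: infinite_finite_induct) (simp_all flip: fps_const_mult)

lemma fps_prod_nth_0: "prod f S $ 0 = (\<Prod>i\<in>S. f i $ 0 :: 'a :: comm_ring_1)"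
  by (induction S rule: infinite_finite_induct) (simp_all add: fps_mult_nth_0)

definition wvar :: "rat fps fps" where
  "wvar = fps_const fps_X"

lemma wvar_power_mult_nth_low: "j < k \<Longrightarrow> (wvar ^ k * Z) $ d $ j = 0"
  by (simp add: wvar_def fps_const_power fps_X_power_mult_nth)

definition theta :: "rat fps fps \<Rightarrow> rat fps fps" where
  "theta F = Abs_fps (\<lambda>d. (fps_X + of_nat d) * F $ d)"

definition theta_at :: "rat \<Rightarrow> rat fps \<Rightarrow> rat fps" where
  "theta_at s g = Abs_fps (\<lambda>d. (s + of_nat d) * g $ d)"

definition qeuler :: "rat fps \<Rightarrow> rat fps" where
  "qeuler g = Abs_fps (\<lambda>d. of_nat d * g $ d)"

lemma theta_nth [simp]: "theta F $ d = (fps_X + of_nat d) * F $ d"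
  by (simp add: theta_def)

lemma theta_at_nth [simp]: "theta_at s g $ d = (s + of_nat d) * g $ d"
  by (simp add: theta_at_def)

lemma qeuler_nth [simp]: "qeuler g $ d = of_nat d * g $ d"
  by (simp add: qeuler_def)

lemma qeuler_0 [simp]: "qeuler 0 = 0"
  by (rule fps_ext) simp

lemma liftq_nth [simp]: "liftq c $ d = fps_const (c $ d)"
  by (simp add: liftq_def)

lemma at_w0_nth [simp]: "at_w0 F $ d = F $ d $ 0"
  by (simp add: at_w0_def)

lemma liftq_mult_nth: "(liftq c * H) $ d = (\<Sum>i=0..d. fps_const (c $ i) * H $ (d - i))"
  by (simp add: fps_mult_nth)

lemma liftq_mult: "liftq (c * e) = liftq c * liftq e"
  by (rule fps_ext) (simp add: fps_mult_nth fps_const_sum)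

lemma liftq_1 [simp]: "liftq 1 = 1"
  by (rule fps_ext) (simp add: fps_one_nth)

lemma liftq_add: "liftq (c + e) = liftq c + liftq e"
  by (rule fps_ext) simp

lemma liftq_diff: "liftq (c - e) = liftq c - liftq e"
  by (rule fps_ext) simp

lemma liftq_const: "liftq (fps_const r) = fps_const (fps_const r)"
  by (rule fps_ext) simp

lemma liftq_const_mult_X: "liftq (fps_const A * fps_X) = fps_const (fps_const A) * fps_X"
  by (rule fps_ext) simp

lemma at_w0_mult: "at_w0 (A * B) = at_w0 A * at_w0 B"
  by (rule fps_ext) (simp add: fps_mult_nth fps_sum_nth)

lemma at_w0_liftq [simp]: "at_w0 (liftq c) = c"
  by (rule fps_ext) simp

lemma liftq_0 [simp]: "liftq 0 = 0"
  by (rule fps_ext) simp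

lemma at_w0_0 [simp]: "at_w0 0 = 0"
  by (rule fps_ext) simp

lemma at_w0_1 [simp]: "at_w0 1 = 1"
  by (rule fps_ext) (simp add: fps_one_nth)

lemma liftq_eq_0_iff [simp]: "liftq c = 0 \<longleftrightarrow> c = 0"
  by (metis at_w0_liftq at_w0_0 liftq_0)

lemma theta_liftq_mult: "theta (liftq c * H) = liftq c * theta H + liftq (qeuler c) * H"
proof (rule fps_ext)
  fix d
  have "theta (liftq c * H) $ d = (\<Sum>i=0..d. (fps_X + of_nat d) * (fps_const (c $ i) * H $ (d - i)))"
    by (simp add: liftq_mult_nth sum_distrib_left)
  also have "\<dots> = (\<Sum>i=0..d. fps_const (c $ i) * ((fps_X + of_nat (d - i)) * H $ (d - i))
       + fps_const (of_nat i * c $ i) * H $ (d - i))"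
  proof (rule sum.cong)
    fix i assume "i \<in> {0..d}"
    then have dd: "(of_nat d :: rat fps) = of_nat (d - i) + of_nat i" by (simp flip: of_nat_add)
    have e: "fps_const (of_nat i * c $ i) = (of_nat i :: rat fps) * fps_const (c $ i)"
      by (simp flip: fps_of_nat)
    show "(fps_X + of_nat d) * (fps_const (c $ i) * H $ (d - i))
      = fps_const (c $ i) * ((fps_X + of_nat (d - i)) * H $ (d - i))
        + fps_const (of_nat i * c $ i) * H $ (d - i)"
      unfolding dd e by (simp only: ring_distribs mult_ac add_ac)
  qed simp
  also have "\<dots> = (liftq c * theta H + liftq (qeuler c) * H) $ d"
    by (simp add: liftq_mult_nth sum.distrib)
  finally show "theta (liftq c * H) $ d = (liftq c * theta H + liftq (qeuler c) * H) $ d" .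
qed

lemma theta_at_mult: "theta_at s (c * g) = c * theta_at s g + qeuler c * g"
proof (rule fps_ext)
  fix d
  have "theta_at s (c * g) $ d = (\<Sum>i=0..d. (s + of_nat d) * (c $ i * g $ (d - i)))"
    by (simp add: fps_mult_nth sum_distrib_left)
  also have "\<dots> = (\<Sum>i=0..d. c $ i * ((s + of_nat (d - i)) * g $ (d - i))
       + (of_nat i * c $ i) * g $ (d - i))"
  proof (rule sum.cong)
    fix i assume "i \<in> {0..d}"
    then have dd: "(of_nat d :: rat) = of_nat (d - i) + of_nat i" by (simp flip: of_nat_add)
    show "(s + of_nat d) * (c $ i * g $ (d - i))
      = c $ i * ((s + of_nat (d - i)) * g $ (d - i)) + (of_nat i * c $ i) * g $ (d - i)"
      unfolding dd by (simp only: ring_distribs mult_ac add_ac)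
  qed simp
  also have "\<dots> = (c * theta_at s g + qeuler c * g) $ d"
    by (simp add: fps_mult_nth sum.distrib)
  finally show "theta_at s (c * g) $ d = (c * theta_at s g + qeuler c * g) $ d" .
qed

lemma theta_sum: "theta (sum f S) = (\<Sum>i\<in>S. theta (f i))"
  by (rule fps_ext) (simp add: fps_sum_nth sum_distrib_left)

lemma theta_at_sum: "theta_at s (sum f S) = (\<Sum>i\<in>S. theta_at s (f i))"
  by (rule fps_ext) (simp add: fps_sum_nth sum_distrib_left)

lemma theta_at_0 [simp]: "theta_at s 0 = 0"
  by (rule fps_ext) simp

lemma theta_at_const_mult: "theta_at s (fps_const c * g) = fps_const c * theta_at s g"
  by (rule fps_ext) (simp add: algebra_simps)

lemma theta_at_1: "theta_at s 1 = fps_const s"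
  by (rule fps_ext) (simp add: fps_one_nth)

lemma theta_wvar_mult: "theta (wvar * F) = wvar * theta F"
  by (rule fps_ext) (simp add: wvar_def algebra_simps)

lemma theta_wvar_power_mult: "theta (wvar ^ j * F) = wvar ^ j * theta F"
  by (induction j) (simp_all add: theta_wvar_mult mult.assoc)

lemma funpow_theta_nth: "(theta ^^ i) F $ d = (fps_X + of_nat d) ^ i * F $ d"
  by (induction i) auto

lemma funpow_theta_at_nth: "(theta_at s ^^ i) g $ d = (s + of_nat d) ^ i * g $ d"
  by (induction i) auto

lemma funpow_theta_at_1: "(theta_at s ^^ i) 1 = fps_const (s ^ i)"
  by (rule fps_ext) (simp add: funpow_theta_at_nth)

lemma theta_at_0_eq_0_nth:
  assumes "theta_at 0 y = 0" and "d > 0"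
  shows "y $ d = 0"
  using arg_cong[OF assms(1), of "\<lambda>x. x $ d"] assms(2) by simp

section \<open>The operator M\<close>

definition normalized :: "rat fps fps \<Rightarrow> rat fps fps" where
  "normalized F = F * liftq (inverse (at_w0 F))"

lemma opM_normalized: "opM F = normalized F + Abs_fps (\<lambda>d. fps_shift 1 (of_nat d * normalized F $ d))"
  by (simp add: opM_def normalized_def Let_def)

lemma at_w0_normalized: "F $ 0 $ 0 \<noteq> 0 \<Longrightarrow> at_w0 (normalized F) = 1"
  unfolding normalized_def at_w0_mult at_w0_liftq by (rule inverse_mult_eq_1') simp

lemma opM_nth_0: "F $ 0 = 1 \<Longrightarrow> opM F $ 0 = 1"
  by (simp add: opM_normalized normalized_def)

lemma opM_eq_1:
  assumes "normalized F = 1"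
  shows "opM F = 1"
proof -
  have "Abs_fps (\<lambda>d. fps_shift 1 ((of_nat d :: rat fps) * (1 :: rat fps fps) $ d)) = 0"
    by (rule fps_ext) (simp add: fps_one_nth)
  then show ?thesis using assms by (simp add: opM_normalized)
qed

lemma fps_X_mult_fps_shift_1: "h $ 0 = 0 \<Longrightarrow> fps_X * fps_shift 1 (h :: rat fps) = h"
  by (rule fps_ext) (auto simp: not0_implies_Suc)

text \<open>q d/dq of F/F(0,q) vanishes at w = 0, so the division by w in opM is exact.\<close>

lemma wvar_mult_opM:
  assumes "F $ 0 = 1"
  shows "wvar * opM F = theta (normalized F)"
proof (rule fps_ext)
  fix d
  have "at_w0 (normalized F) = 1" using assms by (intro at_w0_normalized) simp
  from arg_cong[OF this, of "\<lambda>x. x $ d"]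
  have "normalized F $ d $ 0 = (if d = 0 then 1 else 0)" by (simp add: fps_one_nth)
  then have "fps_X * fps_shift 1 (of_nat d * normalized F $ d) = of_nat d * normalized F $ d"
    by (intro fps_X_mult_fps_shift_1) simp
  then show "(wvar * opM F) $ d = theta (normalized F) $ d"
    by (simp add: wvar_def opM_normalized fps_const_mult_left algebra_simps)
qed

section \<open>Operators polynomial in \<theta>\<close>

definition theta_poly :: "(nat \<Rightarrow> rat fps) \<Rightarrow> nat \<Rightarrow> rat fps fps \<Rightarrow> rat fps fps" where
  "theta_poly b m F = (\<Sum>i\<le>m. liftq (b i) * (theta ^^ i) F)"

definition theta_poly_at :: "(nat \<Rightarrow> rat fps) \<Rightarrow> nat \<Rightarrow> rat \<Rightarrow> rat fps \<Rightarrow> rat fps" where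
  "theta_poly_at b m s g = (\<Sum>i\<le>m. b i * (theta_at s ^^ i) g)"

text \<open>An operator is tracked simultaneously with w formal (P) and with w specialised (P_at),
  so that identities between coefficient sequences transfer from one setting to the other.\<close>

definition theta_coeffs ::
    "(nat \<Rightarrow> rat fps) \<Rightarrow> nat \<Rightarrow> (rat fps fps \<Rightarrow> rat fps fps) \<Rightarrow> (rat \<Rightarrow> rat fps \<Rightarrow> rat fps) \<Rightarrow> bool" where
  "theta_coeffs b m P P_at \<longleftrightarrow> (\<forall>i>m. b i = 0) \<and> (\<forall>F. P F = theta_poly b m F)
     \<and> (\<forall>s g. P_at s g = theta_poly_at b m s g)"

definition theta_comp_coeffs :: "(nat \<Rightarrow> rat fps) \<Rightarrow> nat \<Rightarrow> rat fps" where
  "theta_comp_coeffs b i = (case i of 0 \<Rightarrow> 0 | Suc j \<Rightarrow> b j) + qeuler (b i)"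

lemma theta_coeffs_funpow:
  "theta_coeffs (\<lambda>i. if i = k then 1 else 0) k (theta ^^ k) (\<lambda>s. theta_at s ^^ k)"
proof -
  have "liftq (if i = k then 1 else 0) * (theta ^^ i) F = (if i = k then (theta ^^ k) F else 0)" for i F
    by simp
  moreover have "(if i = k then 1 else 0) * (theta_at s ^^ i) g
      = (if i = k then (theta_at s ^^ k) g else 0)" for i s g
    by simp
  ultimately show ?thesis by (simp add: theta_coeffs_def theta_poly_def theta_poly_at_def)
qed

lemma theta_coeffs_mono:
  assumes "theta_coeffs b m P P_at" and "m \<le> m'"
  shows "theta_coeffs b m' P P_at"
proof -
  have b: "\<forall>i\<in>{..m'} - {..m}. b i = 0" using assms by (auto simp: theta_coeffs_def)
  have "theta_poly b m F = theta_poly b m' F" for F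
    unfolding theta_poly_def using assms(2) b by (intro sum.mono_neutral_left) auto
  moreover have "theta_poly_at b m s g = theta_poly_at b m' s g" for s g
    unfolding theta_poly_at_def using assms(2) b by (intro sum.mono_neutral_left) auto
  ultimately show ?thesis using assms by (auto simp: theta_coeffs_def)
qed

lemma theta_coeffs_theta:
  assumes "theta_coeffs b m P P_at"
  shows "theta_coeffs (theta_comp_coeffs b) (Suc m) (\<lambda>F. theta (P F)) (\<lambda>s g. theta_at s (P_at s g))"
proof -
  have b: "\<forall>i>m. b i = 0" using assms by (simp add: theta_coeffs_def)
  have "theta (theta_poly b m F) = theta_poly (theta_comp_coeffs b) (Suc m) F" for F
  proof -
    have "theta (theta_poly b m F)
        = (\<Sum>i\<le>m. liftq (b i) * (theta ^^ Suc i) F) + (\<Sum>i\<le>m. liftq (qeuler (b i)) * (theta ^^ i) F)"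
      by (simp add: theta_poly_def theta_sum theta_liftq_mult sum.distrib)
    also have "(\<Sum>i\<le>m. liftq (b i) * (theta ^^ Suc i) F)
        = (\<Sum>i\<le>Suc m. liftq (case i of 0 \<Rightarrow> 0 | Suc j \<Rightarrow> b j) * (theta ^^ i) F)"
      by (subst sum.atMost_Suc_shift) simp
    also have "(\<Sum>i\<le>m. liftq (qeuler (b i)) * (theta ^^ i) F)
        = (\<Sum>i\<le>Suc m. liftq (qeuler (b i)) * (theta ^^ i) F)"
      using b by simp
    finally show ?thesis
      by (simp add: theta_poly_def theta_comp_coeffs_def liftq_add distrib_right sum.distrib)
  qed
  moreover have "theta_at s (theta_poly_at b m s g) = theta_poly_at (theta_comp_coeffs b) (Suc m) s g" for s g
  proof -
    have "theta_at s (theta_poly_at b m s g)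
        = (\<Sum>i\<le>m. b i * (theta_at s ^^ Suc i) g) + (\<Sum>i\<le>m. qeuler (b i) * (theta_at s ^^ i) g)"
      by (simp add: theta_poly_at_def theta_at_sum theta_at_mult sum.distrib)
    also have "(\<Sum>i\<le>m. b i * (theta_at s ^^ Suc i) g)
        = (\<Sum>i\<le>Suc m. (case i of 0 \<Rightarrow> 0 | Suc j \<Rightarrow> b j) * (theta_at s ^^ i) g)"
      by (subst sum.atMost_Suc_shift) simp
    also have "(\<Sum>i\<le>m. qeuler (b i) * (theta_at s ^^ i) g)
        = (\<Sum>i\<le>Suc m. qeuler (b i) * (theta_at s ^^ i) g)"
      using b by simp
    finally show ?thesis
      by (simp add: theta_poly_at_def theta_comp_coeffs_def distrib_right sum.distrib)
  qed
  moreover have "\<forall>i>Suc m. theta_comp_coeffs b i = 0"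
    using b by (auto simp: theta_comp_coeffs_def split: nat.split)
  ultimately show ?thesis using assms by (simp add: theta_coeffs_def)
qed

lemma theta_comp_coeffs_top:
  "theta_coeffs b m P P_at \<Longrightarrow> theta_comp_coeffs b (Suc m) = b m"
  by (simp add: theta_coeffs_def theta_comp_coeffs_def)

lemma theta_coeffs_mult:
  assumes "theta_coeffs b m P P_at"
  shows "theta_coeffs (\<lambda>i. c * b i) m (\<lambda>F. liftq c * P F) (\<lambda>s g. c * P_at s g)"
  using assms
  by (simp add: theta_coeffs_def theta_poly_def theta_poly_at_def sum_distrib_left liftq_mult mult.assoc)

lemma theta_coeffs_add:
  assumes "theta_coeffs b m P P_at" and "theta_coeffs b' m P' P'_at"
  shows "theta_coeffs (\<lambda>i. b i + b' i) m (\<lambda>F. P F + P' F) (\<lambda>s g. P_at s g + P'_at s g)"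
  using assms
  by (simp add: theta_coeffs_def theta_poly_def theta_poly_at_def liftq_add distrib_right sum.distrib)

lemma theta_coeffs_diff:
  assumes "theta_coeffs b m P P_at" and "theta_coeffs b' m P' P'_at"
  shows "theta_coeffs (\<lambda>i. b i - b' i) m (\<lambda>F. P F - P' F) (\<lambda>s g. P_at s g - P'_at s g)"
  using assms
  by (simp add: theta_coeffs_def theta_poly_def theta_poly_at_def liftq_diff left_diff_distrib sum_subtractf)

fun factored_op :: "(nat \<Rightarrow> rat fps) \<Rightarrow> nat \<Rightarrow> rat fps fps \<Rightarrow> rat fps fps" where
  "factored_op u 0 = (\<lambda>F. liftq (inverse (u 0)) * F)"
| "factored_op u (Suc m) = (\<lambda>F. liftq (inverse (u (Suc m))) * theta (factored_op u m F))"

fun factored_op_at :: "(nat \<Rightarrow> rat fps) \<Rightarrow> nat \<Rightarrow> rat \<Rightarrow> rat fps \<Rightarrow> rat fps" where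
  "factored_op_at u 0 = (\<lambda>s g. inverse (u 0) * g)"
| "factored_op_at u (Suc m) = (\<lambda>s g. inverse (u (Suc m)) * theta_at s (factored_op_at u m s g))"

lemma theta_coeffs_factored_op:
  "\<exists>b. theta_coeffs b m (factored_op u m) (factored_op_at u m) \<and> b m = (\<Prod>p\<le>m. inverse (u p))"
proof (induction m)
  case 0
  show ?case
    using theta_coeffs_mult[OF theta_coeffs_funpow[of 0], of "inverse (u 0)"]
    by (intro exI[of _ "\<lambda>i. inverse (u 0) * (if i = 0 then 1 else 0)"]) simp
next
  case (Suc m)
  then obtain b where b: "theta_coeffs b m (factored_op u m) (factored_op_at u m)"
    and top: "b m = (\<Prod>p\<le>m. inverse (u p))" by blast
  have "theta_coeffs (\<lambda>i. inverse (u (Suc m)) * theta_comp_coeffs b i) (Suc m)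
      (factored_op u (Suc m)) (factored_op_at u (Suc m))"
    using theta_coeffs_mult[OF theta_coeffs_theta[OF b], of "inverse (u (Suc m))"] by simp
  moreover have "inverse (u (Suc m)) * theta_comp_coeffs b (Suc m) = (\<Prod>p\<le>Suc m. inverse (u p))"
    by (simp add: theta_comp_coeffs_top[OF b] top mult.commute)
  ultimately show ?case by blast
qed

definition shifted_theta_prod :: "rat list \<Rightarrow> rat fps fps \<Rightarrow> rat fps fps" where
  "shifted_theta_prod cs F = Abs_fps (\<lambda>d. (\<Prod>c\<leftarrow>cs. fps_X + fps_const (of_nat d + c)) * F $ d)"

definition shifted_theta_prod_at :: "rat list \<Rightarrow> rat \<Rightarrow> rat fps \<Rightarrow> rat fps" where
  "shifted_theta_prod_at cs s g = Abs_fps (\<lambda>d. (\<Prod>c\<leftarrow>cs. s + of_nat d + c) * g $ d)"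

lemma shifted_theta_prod_Nil: "shifted_theta_prod [] = id"
  by (auto simp: shifted_theta_prod_def fun_eq_iff intro: fps_ext)

lemma shifted_theta_prod_at_Nil: "shifted_theta_prod_at [] = (\<lambda>s. id)"
  by (auto simp: shifted_theta_prod_at_def fun_eq_iff intro: fps_ext)

lemma shifted_theta_prod_Cons:
  "shifted_theta_prod (c # cs)
     = (\<lambda>F. theta (shifted_theta_prod cs F) + liftq (fps_const c) * shifted_theta_prod cs F)"
  by (rule ext, rule fps_ext)
    (simp add: shifted_theta_prod_def liftq_const fps_const_mult_left[symmetric] algebra_simps
      fps_of_nat flip: fps_const_add)

lemma shifted_theta_prod_at_Cons:
  "shifted_theta_prod_at (c # cs)
     = (\<lambda>s g. theta_at s (shifted_theta_prod_at cs s g) + fps_const c * shifted_theta_prod_at cs s g)"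
  by (intro ext, rule fps_ext) (simp add: shifted_theta_prod_at_def algebra_simps)

lemma theta_coeffs_shifted_theta_prod:
  "\<exists>e. theta_coeffs e (length cs) (shifted_theta_prod cs) (shifted_theta_prod_at cs)
     \<and> e (length cs) = 1"
proof (induction cs)
  case Nil
  have "theta_coeffs (\<lambda>i. if i = 0 then 1 else 0) 0 (shifted_theta_prod []) (shifted_theta_prod_at [])"
    using theta_coeffs_funpow[of 0]
    by (simp add: shifted_theta_prod_Nil shifted_theta_prod_at_Nil)
  then show ?case by (intro exI[of _ "\<lambda>i. if i = 0 then 1 else 0"]) simp
next
  case (Cons c cs)
  then obtain e where e: "theta_coeffs e (length cs) (shifted_theta_prod cs) (shifted_theta_prod_at cs)"
    and top: "e (length cs) = 1" by blast
  have "theta_coeffs (\<lambda>i. theta_comp_coeffs e i + fps_const c * e i) (length (c # cs))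
      (shifted_theta_prod (c # cs)) (shifted_theta_prod_at (c # cs))"
    using theta_coeffs_add[OF theta_coeffs_theta[OF e]
        theta_coeffs_mono[OF theta_coeffs_mult[OF e, of "fps_const c"]]]
    by (simp add: shifted_theta_prod_Cons shifted_theta_prod_at_Cons liftq_const)
  moreover have "theta_comp_coeffs e (length (c # cs)) + fps_const c * e (length (c # cs)) = 1"
    using theta_comp_coeffs_top[OF e] e top by (simp add: theta_coeffs_def)
  ultimately show ?case by blast
qed

definition hyp_op :: "rat list \<Rightarrow> rat \<Rightarrow> rat fps fps \<Rightarrow> rat fps fps" where
  "hyp_op cs A F = (theta ^^ length cs) F - liftq (fps_const A * fps_X) * shifted_theta_prod cs F"

definition hyp_op_at :: "rat list \<Rightarrow> rat \<Rightarrow> rat \<Rightarrow> rat fps \<Rightarrow> rat fps" where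
  "hyp_op_at cs A s g = (theta_at s ^^ length cs) g - (fps_const A * fps_X) * shifted_theta_prod_at cs s g"

lemma theta_coeffs_hyp_op:
  "\<exists>c. theta_coeffs c (length cs) (hyp_op cs A) (hyp_op_at cs A)
     \<and> c (length cs) = 1 - fps_const A * fps_X"
proof -
  obtain e where e: "theta_coeffs e (length cs) (shifted_theta_prod cs) (shifted_theta_prod_at cs)"
    and top: "e (length cs) = 1"
    using theta_coeffs_shifted_theta_prod by blast
  have "theta_coeffs (\<lambda>i. (if i = length cs then 1 else 0) - fps_const A * fps_X * e i) (length cs)
      (hyp_op cs A) (hyp_op_at cs A)"
    using theta_coeffs_diff[OF theta_coeffs_funpow theta_coeffs_mult[OF e, of "fps_const A * fps_X"]]
    by (simp add: hyp_op_def[abs_def] hyp_op_at_def[abs_def])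
  then show ?thesis using top by force
qed

section \<open>Uniqueness of coefficients and of factorisations\<close>

lemma low_order_theta_poly_eq_0:
  assumes F0: "F $ 0 = 1"
    and high: "\<And>i. k \<le> i \<Longrightarrow> b i = 0"
    and low: "\<And>d j. j < k \<Longrightarrow> theta_poly b k F $ d $ j = 0"
  shows "b i = 0"
proof -
  have "\<forall>i. b i $ d = 0" for d
  proof (induction d rule: less_induct)
    case (less d)
    have summand: "(liftq (b i) * (theta ^^ i) F) $ d = fps_const (b i $ d) * fps_X ^ i" for i
    proof -
      have "(liftq (b i) * (theta ^^ i) F) $ d
          = (\<Sum>e=0..d. if e = d then fps_const (b i $ d) * (theta ^^ i) F $ 0 else 0)"
        unfolding liftq_mult_nth using less.IH by (intro sum.cong) auto
      then show ?thesis by (simp add: funpow_theta_nth F0)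
    qed
    have "theta_poly b k F $ d $ j = (\<Sum>i\<le>k. if i = j then b j $ d else 0)" for j
      by (simp add: theta_poly_def fps_sum_nth summand fps_X_power_nth if_distrib cong: if_cong)
    then have "theta_poly b k F $ d $ j = (if j \<le> k then b j $ d else 0)" for j
      by simp
    then show ?case using low high by (metis not_le less_imp_le fps_zero_nth)
  qed
  then show ?thesis by (simp add: fps_ext)
qed

lemma polyfun_eq_0_on_infinite_set:
  fixes c :: "nat \<Rightarrow> rat"
  assumes "infinite S" and "\<And>s. s \<in> S \<Longrightarrow> (\<Sum>i\<le>m. c i * s ^ i) = 0" and "i \<le> m"
  shows "c i = 0"
proof (rule ccontr)
  assume "c i \<noteq> 0"
  then have "finite {z::real. (\<Sum>i\<le>m. of_rat (c i) * z ^ i) = 0}"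
    using polyfun_finite_roots[of "\<lambda>i. of_rat (c i)" m] assms(3) by auto
  moreover have "of_rat ` S \<subseteq> {z::real. (\<Sum>i\<le>m. of_rat (c i) * z ^ i) = 0}"
  proof
    fix z :: real assume "z \<in> of_rat ` S"
    then obtain s where s: "s \<in> S" "z = of_rat s" by blast
    have "(\<Sum>i\<le>m. of_rat (c i) * z ^ i) = (of_rat (\<Sum>i\<le>m. c i * s ^ i) :: real)"
      unfolding s(2) of_rat_sum of_rat_mult of_rat_power by (rule refl)
    then show "z \<in> {z. (\<Sum>i\<le>m. of_rat (c i) * z ^ i) = 0}" using assms(2)[OF s(1)] by simp
  qed
  ultimately have "finite (of_rat ` S :: real set)" by (rule finite_subset[rotated])
  then have "finite S" by (simp add: finite_image_iff inj_on_def)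
  then show False using assms(1) by simp
qed

text \<open>Applied to 1, the specialised operator evaluates to \<Sum> b_i s^i: its coefficients are
  polynomials in s, hence determined by infinitely many values of s.\<close>

lemma theta_coeffs_eq_if_agree_at_1:
  assumes P: "theta_coeffs b m P P_at" and P': "theta_coeffs b' m P' P'_at"
    and "\<And>d. infinite (S d)" and "\<And>d s. s \<in> S d \<Longrightarrow> P_at s 1 $ d = P'_at s 1 $ d"
  shows "P_at = P'_at"
proof -
  have "b i = b' i" if "i \<le> m" for i
  proof (rule fps_ext)
    fix d
    have "b i $ d - b' i $ d = 0"
    proof (rule polyfun_eq_0_on_infinite_set[OF assms(3)[of d] _ that])
      fix s assume "s \<in> S d"
      with assms(4) P P' show "(\<Sum>i\<le>m. (b i $ d - b' i $ d) * s ^ i) = 0"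
        by (simp add: theta_coeffs_def theta_poly_at_def funpow_theta_at_1 fps_sum_nth
            left_diff_distrib sum_subtractf)
    qed
    then show "b i $ d = b' i $ d" by simp
  qed
  then have "theta_poly_at b m s g = theta_poly_at b' m s g" for s g
    unfolding theta_poly_at_def by (intro sum.cong) simp_all
  then show ?thesis using P P' by (simp add: theta_coeffs_def fun_eq_iff)
qed

lemma factored_op_at_Suc_right:
  "factored_op_at v (Suc m) t g = factored_op_at (\<lambda>p. v (Suc p)) m t (theta_at t (inverse (v 0) * g))"
  by (induction m arbitrary: g) auto

lemma factored_op_at_const_mult:
  "factored_op_at u m s (fps_const c * g) = fps_const c * factored_op_at u m s g"
  by (induction m) (simp_all add: theta_at_const_mult mult.left_commute)

lemma factored_op_at_0 [simp]: "factored_op_at u m s 0 = 0"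
  by (induction m) simp_all

text \<open>For s = 0, \<theta> = q d/dq only kills constants.\<close>

lemma factored_op_at_0_kernel:
  assumes "\<forall>p\<le>m. u p $ 0 \<noteq> 0" and "factored_op_at u m 0 h = 0" and "h $ 0 = 0"
  shows "h = 0"
  using assms
proof (induction m arbitrary: u h)
  case 0
  then show ?case by simp
next
  case (Suc m)
  define y where "y = inverse (u 0) * h"
  have "factored_op_at (\<lambda>p. u (Suc p)) m 0 (theta_at 0 y) = 0"
    using Suc.prems(2) by (simp only: factored_op_at_Suc_right y_def)
  then have "theta_at 0 y = 0"
    using Suc.IH[of "\<lambda>p. u (Suc p)" "theta_at 0 y"] Suc.prems(1) by simp
  then have "y $ d = 0" for d
    using Suc.prems(3) theta_at_0_eq_0_nth[of y d] by (cases "d = 0") (simp_all add: y_def)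
  then have "y = 0" by (simp add: fps_ext)
  then show ?case using Suc.prems(1) by (simp add: y_def)
qed

lemma factored_op_at_Suc_first_factor:
  assumes u: "u 0 $ 0 = 1" and v: "\<forall>p\<le>Suc m. v p $ 0 = 1"
    and eq: "factored_op_at u (Suc m) = factored_op_at v (Suc m)"
  shows "u 0 = v 0"
proof -
  have "inverse (u 0) * u 0 = 1" using u by (intro inverse_mult_eq_1) simp
  then have "factored_op_at (\<lambda>p. v (Suc p)) m 0 (theta_at 0 (inverse (v 0) * u 0)) = 0"
    using fun_cong[OF fun_cong[OF eq, of 0], of "u 0"]
    by (simp only: factored_op_at_Suc_right theta_at_1) simp
  moreover have "\<forall>p\<le>m. v (Suc p) $ 0 \<noteq> 0" using v by simp
  ultimately have "theta_at 0 (inverse (v 0) * u 0) = 0"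
    using factored_op_at_0_kernel by simp
  then have vu: "inverse (v 0) * u 0 = 1"
    using u v theta_at_0_eq_0_nth by (intro fps_ext) (case_tac "n = 0"; auto)
  have "v 0 * inverse (v 0) = 1" using v by (intro inverse_mult_eq_1') simp
  then have "u 0 = v 0 * (inverse (v 0) * u 0)" by (simp add: mult.assoc[symmetric])
  then show ?thesis by (simp add: vu)
qed

lemma factored_op_at_inj:
  assumes "\<forall>p\<le>m. u p $ 0 = 1" and "\<forall>p\<le>m. v p $ 0 = 1"
    and "factored_op_at u m = factored_op_at v m"
  shows "\<forall>p\<le>m. u p = v p"
  using assms
proof (induction m arbitrary: u v)
  case 0
  have "factored_op_at u 0 0 1 = factored_op_at v 0 0 1" using 0(3) by simp
  then have "inverse (inverse (u 0)) = inverse (inverse (v 0))" by simp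
  then show ?case using 0(1,2) by simp
next
  case (Suc m)
  define u' v' where "u' = (\<lambda>p. u (Suc p))" and "v' = (\<lambda>p. v (Suc p))"
  have u0: "u 0 = v 0"
    using Suc.prems by (intro factored_op_at_Suc_first_factor) auto
  have iv: "inverse (v 0) * v 0 = 1" using Suc.prems(2) by (intro inverse_mult_eq_1) simp
  txt \<open>After cancelling the common first factor, both sides act on the constant s.\<close>
  have "factored_op_at u' m s 1 = factored_op_at v' m s 1" if "s \<noteq> 0" for s
  proof -
    have "factored_op_at u' m s (fps_const s * 1) = factored_op_at v' m s (fps_const s * 1)"
      using fun_cong[OF fun_cong[OF Suc.prems(3), of s], of "v 0"]
      by (simp only: factored_op_at_Suc_right u0 iv theta_at_1 u'_def v'_def) simp
    then show ?thesis using that by (simp only: factored_op_at_const_mult) simp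
  qed
  moreover obtain b b' where "theta_coeffs b m (factored_op u' m) (factored_op_at u' m)"
    and "theta_coeffs b' m (factored_op v' m) (factored_op_at v' m)"
    using theta_coeffs_factored_op by blast
  moreover have "infinite {s :: rat. s \<noteq> 0}"
    using infinite_UNIV_char_0[where 'a=rat] by (simp add: Collect_neg_eq finite_Diff2)
  ultimately have "factored_op_at u' m = factored_op_at v' m"
    by (intro theta_coeffs_eq_if_agree_at_1[where S="\<lambda>_. {s. s \<noteq> 0}"]) auto
  then have "\<forall>p\<le>m. u' p = v' p"
    using Suc.IH[of u' v'] Suc.prems(1,2) by (simp add: u'_def v'_def)
  then show ?case using u0 unfolding u'_def v'_def by (metis Suc_le_mono not0_implies_Suc)
qed

section \<open>An adjoint for \<theta>\<close>

text \<open>With respect to the pairing (f, g) \<mapsto> [q^N] f g, the adjoint of theta_at s is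
  - theta_at (- s - N); this turns a factorisation of an operator into the reversed one.\<close>

definition pairing :: "nat \<Rightarrow> rat fps \<Rightarrow> rat fps \<Rightarrow> rat" where
  "pairing N f g = (f * g) $ N"

lemma pairing_mult_left: "pairing N (c * f) g = pairing N f (c * g)"
  by (simp add: pairing_def mult_ac)

lemma pairing_diff:
  "pairing N (f - f') g = pairing N f g - pairing N f' g"
  "pairing N f (g - g') = pairing N f g - pairing N f g'"
  by (simp_all add: pairing_def algebra_simps)

lemma pairing_fps_X_power: "j \<le> N \<Longrightarrow> pairing N (fps_X ^ j) h = h $ (N - j)"
  by (simp add: pairing_def fps_X_power_mult_nth)

lemma pairing_theta_at: "pairing N (theta_at s f) g = - pairing N f (theta_at (- s - of_nat N) g)"
proof -
  have "pairing N (theta_at s f) g = (\<Sum>i=0..N. (s + of_nat i) * f $ i * g $ (N - i))"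
    by (simp add: pairing_def fps_mult_nth)
  also have "\<dots> = - (\<Sum>i=0..N. f $ i * ((- s - of_nat N + of_nat (N - i)) * g $ (N - i)))"
    unfolding sum_negf[symmetric]
  proof (rule sum.cong)
    fix i assume "i \<in> {0..N}"
    then have "(of_nat (N - i) :: rat) = of_nat N - of_nat i" by (simp add: of_nat_diff)
    then show "(s + of_nat i) * f $ i * g $ (N - i)
        = - (f $ i * ((- s - of_nat N + of_nat (N - i)) * g $ (N - i)))"
      by (simp add: algebra_simps)
  qed simp
  also have "\<dots> = - pairing N f (theta_at (- s - of_nat N) g)"
    by (simp add: pairing_def fps_mult_nth)
  finally show ?thesis .
qed

lemma pairing_funpow_theta_at:
  "pairing N ((theta_at s ^^ k) f) g = (-1) ^ k * pairing N f ((theta_at (- s - of_nat N) ^^ k) g)"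
proof (induction k arbitrary: g)
  case (Suc k)
  have "pairing N ((theta_at s ^^ Suc k) f) g
      = - ((-1) ^ k * pairing N f ((theta_at (- s - of_nat N) ^^ k) (theta_at (- s - of_nat N) g)))"
    by (simp add: pairing_theta_at Suc.IH)
  then show ?case by (simp add: funpow_Suc_right del: funpow.simps)
qed simp

lemma pairing_factored_op_at:
  "pairing N (factored_op_at u m s f) g
     = (-1) ^ m * pairing N f (factored_op_at (\<lambda>p. u (m - p)) m (- s - of_nat N) g)"
proof (induction m arbitrary: g)
  case 0
  then show ?case by (simp add: pairing_mult_left)
next
  case (Suc m)
  let ?t = "- s - of_nat N"
  have "pairing N (factored_op_at u (Suc m) s f) g
      = - pairing N (factored_op_at u m s f) (theta_at ?t (inverse (u (Suc m)) * g))"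
    by (simp add: pairing_mult_left pairing_theta_at)
  also have "\<dots> = - ((-1) ^ m * pairing N f
      (factored_op_at (\<lambda>p. u (m - p)) m ?t (theta_at ?t (inverse (u (Suc m)) * g))))"
    by (simp add: Suc.IH)
  also have "factored_op_at (\<lambda>p. u (m - p)) m ?t (theta_at ?t (inverse (u (Suc m)) * g))
      = factored_op_at (\<lambda>p. u (Suc m - p)) (Suc m) ?t g"
    by (subst factored_op_at_Suc_right) simp
  finally show ?case by simp
qed

lemma prod_list_reflect:
  assumes "\<And>x. (\<Prod>c\<leftarrow>cs. x + c) = (\<Prod>c\<leftarrow>cs. x + 1 - c)"
  shows "(\<Prod>c\<leftarrow>cs. - x - 1 + c) = (-1) ^ length cs * (\<Prod>c\<leftarrow>cs. x + (c :: 'a :: comm_ring_1))"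
proof -
  have "(\<Prod>c\<leftarrow>cs. - x - 1 + c) = (\<Prod>c\<leftarrow>cs. - (x + 1 - c))"
    by (simp add: algebra_simps)
  also have "\<dots> = (-1) ^ length cs * (\<Prod>c\<leftarrow>cs. x + 1 - c)"
    by (induction cs) (simp_all add: algebra_simps)
  finally show ?thesis by (simp add: assms)
qed

lemma const_mult_X_mult_nth:
  "((fps_const (A :: rat) * fps_X) * h) $ m = (if m = 0 then 0 else A * h $ (m - 1))"
  unfolding mult.assoc fps_mult_left_const_nth fps_X_mult_nth by simp

lemma pairing_q_shifted_theta_prod_at:
  assumes refl: "\<And>x. (\<Prod>c\<leftarrow>cs. x + c) = (\<Prod>c\<leftarrow>cs. x + 1 - c)"
  shows "pairing N ((fps_const A * fps_X) * shifted_theta_prod_at cs s f) g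
    = (-1) ^ length cs * pairing N f ((fps_const A * fps_X) * shifted_theta_prod_at cs (- s - of_nat N) g)"
proof -
  define Q where "Q t i = (\<Prod>c\<leftarrow>cs. t + of_nat i + c)" for t i
  have "pairing N ((fps_const A * fps_X) * shifted_theta_prod_at cs s f) g
      = pairing N (shifted_theta_prod_at cs s f) ((fps_const A * fps_X) * g)"
    by (simp add: pairing_def mult_ac)
  also have "\<dots> = (\<Sum>i=0..N. Q s i * f $ i * (if N - i = 0 then 0 else A * g $ (N - i - 1)))"
    unfolding pairing_def
    by (subst fps_mult_nth) (simp add: const_mult_X_mult_nth shifted_theta_prod_at_def Q_def cong: if_cong)
  also have "\<dots> = (-1) ^ length cs
      * (\<Sum>i=0..N. f $ i * (if N - i = 0 then 0 else A * (Q (- s - of_nat N) (N - i - 1) * g $ (N - i - 1))))"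
    unfolding sum_distrib_left
  proof (rule sum.cong)
    fix i assume i: "i \<in> {0..N}"
    show "Q s i * f $ i * (if N - i = 0 then 0 else A * g $ (N - i - 1))
      = (-1) ^ length cs * (f $ i * (if N - i = 0 then 0 else A * (Q (- s - of_nat N) (N - i - 1) * g $ (N - i - 1))))"
    proof (cases "N - i = 0")
      case False
      then have "Q (- s - of_nat N) (N - i - 1) = (\<Prod>c\<leftarrow>cs. - (s + of_nat i) - 1 + c)"
        using i by (simp add: Q_def of_nat_diff algebra_simps)
      also have "\<dots> = (-1) ^ length cs * Q s i"
        unfolding Q_def by (rule prod_list_reflect[OF refl])
      finally have "Q (- s - of_nat N) (N - i - 1) = (-1) ^ length cs * Q s i" .
      moreover have "(-1 :: rat) ^ length cs * (-1) ^ length cs = 1"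
        by (simp flip: power_mult_distrib)
      ultimately show ?thesis using False by (simp add: mult_ac)
    qed simp
  qed simp
  also have "\<dots> = (-1) ^ length cs
      * pairing N f ((fps_const A * fps_X) * shifted_theta_prod_at cs (- s - of_nat N) g)"
    unfolding pairing_def
    by (subst fps_mult_nth) (simp add: const_mult_X_mult_nth shifted_theta_prod_at_def Q_def cong: if_cong)
  finally show ?thesis .
qed

lemma pairing_hyp_op_at:
  assumes "\<And>x. (\<Prod>c\<leftarrow>cs. x + c) = (\<Prod>c\<leftarrow>cs. x + 1 - c)"
  shows "pairing N (hyp_op_at cs A s f) g = (-1) ^ length cs * pairing N f (hyp_op_at cs A (- s - of_nat N) g)"
  unfolding hyp_op_at_def pairing_diff pairing_funpow_theta_at pairing_q_shifted_theta_prod_at[OF assms]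
  by (simp add: algebra_simps)

section \<open>The hypergeometric series\<close>

lemma prod_list_map_concat: "prod_list (map f (concat xss)) = prod_list (map (\<lambda>xs. prod_list (map f xs)) xss)"
  by (induction xss) simp_all

lemma prod_list_map_upt: "prod_list (map f [m..<n]) = prod f {m..<n}"
  using prod.distinct_set_conv_list[of "[m..<n]" f] by simp

definition hyp_shifts :: "nat \<Rightarrow> (nat \<Rightarrow> nat) \<Rightarrow> rat list" where
  "hyp_shifts l a = concat (map (\<lambda>j. map (\<lambda>r. of_nat r / of_nat (a j)) [1..<a j]) [1..<Suc l])"

lemma prod_hyp_shifts: "(\<Prod>c\<leftarrow>hyp_shifts l a. f c) = (\<Prod>j=1..l. \<Prod>r\<in>{1..<a j}. f (of_nat r / of_nat (a j)))"
  unfolding hyp_shifts_def prod_list_map_concat map_map by (simp only: o_def prod_list_map_upt map_map atLeastLessThanSuc_atLeastAtMost)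

lemma length_hyp_shifts:
  assumes "\<And>j. j \<in> {1..l} \<Longrightarrow> a j \<ge> 1"
  shows "length (hyp_shifts l a) + l = (\<Sum>j=1..l. a j)"
proof -
  have "length (hyp_shifts l a) = (\<Sum>j=1..l. a j - 1)"
    unfolding hyp_shifts_def length_concat map_map
    by (simp only: o_def length_map length_upt interv_sum_list_conv_sum_set_nat set_upt
        atLeastLessThanSuc_atLeastAtMost)
  also have "\<dots> + l = (\<Sum>j=1..l. a j - 1 + 1)" by (subst sum.distrib) simp
  also have "\<dots> = (\<Sum>j=1..l. a j)" using assms by (intro sum.cong) (auto simp: Suc_le_eq)
  finally show ?thesis .
qed

lemma prod_linear_factors_Suc:
  fixes a d :: nat assumes "a \<ge> 1"
  shows "(\<Prod>r=1..a * Suc d. fps_const (of_nat a) * fps_X + fps_const (of_nat r :: rat))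
    = (\<Prod>r=1..a * d. fps_const (of_nat a) * fps_X + fps_const (of_nat r))
      * (fps_const (of_nat a ^ a) * ((fps_X + fps_const (of_nat (Suc d)))
         * (\<Prod>r\<in>{1..<a}. fps_X + fps_const (of_nat d + of_nat r / of_nat a))))"
proof -
  define g where "g = (\<lambda>r::nat. fps_const (of_nat a) * fps_X + fps_const (of_nat r :: rat))"
  define h where "h = (\<lambda>r::nat. fps_X + fps_const (of_nat d + of_nat r / of_nat a :: rat))"
  have e: "a * Suc d = a * d + a" by simp
  have "prod g {1..a * Suc d} = prod g {1..a * d} * prod g {a * d + 1..a * d + a}"
    unfolding e by (rule prod.ub_add_nat) simp
  also have "prod g {a * d + 1..a * d + a} = prod (\<lambda>i. g (i + a * d)) {1..a}"
    using prod.shift_bounds_cl_nat_ivl[of g 1 "a*d" a] by (simp add: add.commute)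
  also have "\<dots> = prod (\<lambda>i. fps_const (of_nat a) * h i) {1..a}"
  proof (rule prod.cong)
    fix i assume "i \<in> {1..a}"
    have "(of_nat (i + a * d) :: rat) = of_nat a * (of_nat d + of_nat i / of_nat a)"
      using assms by (simp add: field_simps)
    then show "g (i + a * d) = fps_const (of_nat a) * h i"
      by (simp add: g_def h_def algebra_simps)
  qed simp
  also have "\<dots> = fps_const (of_nat a) ^ a * prod h {1..a}"
    by (simp add: prod.distrib)
  also have "prod h {1..a} = h a * prod h {1..<a}"
  proof -
    have "{1..a} = insert a {1..<a}" using assms by auto
    then show ?thesis by simp
  qed
  also have "h a = fps_X + fps_const (of_nat (Suc d))"
    using assms by (simp add: h_def add.commute)
  finally show ?thesis by (simp add: g_def h_def mult_ac)
qed

definition hyp_num :: "nat \<Rightarrow> (nat \<Rightarrow> nat) \<Rightarrow> nat \<Rightarrow> rat fps" where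
  "hyp_num l a d = (\<Prod>k=1..l. \<Prod>r=1..a k * d. fps_const (of_nat (a k)) * fps_X + fps_const (of_nat r))"
definition hyp_den :: "nat \<Rightarrow> nat \<Rightarrow> rat fps" where
  "hyp_den n d = (\<Prod>r=1..d. (fps_X + fps_const (of_nat r)) ^ n)"

lemma tildeF_nth: "tildeF l a n $ d = hyp_num l a d * inverse (hyp_den n d)"
  by (simp add: tildeF_def hyp_num_def hyp_den_def)

lemma tildeF_nth_0: "tildeF l a n $ 0 = 1"
  by (simp add: tildeF_nth hyp_num_def hyp_den_def)

lemma hyp_num_Suc:
  assumes "\<And>j. j \<in> {1..l} \<Longrightarrow> a j \<ge> 1"
  shows "hyp_num l a (Suc d) = hyp_num l a d * (fps_const (of_nat (aa l a)) * ((fps_X + fps_const (of_nat (Suc d)))^l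
           * (\<Prod>c\<leftarrow>hyp_shifts l a. fps_X + fps_const (of_nat d + c))))"
proof -
  have "hyp_num l a (Suc d) = (\<Prod>k=1..l. (\<Prod>r=1..a k * d. fps_const (of_nat (a k)) * fps_X + fps_const (of_nat r))
      * (fps_const (of_nat (a k) ^ a k) * ((fps_X + fps_const (of_nat (Suc d)))
         * (\<Prod>r\<in>{1..<a k}. fps_X + fps_const (of_nat d + of_nat r / of_nat (a k))))))"
    unfolding hyp_num_def using assms by (intro prod.cong refl prod_linear_factors_Suc) auto
  also have "\<dots> = hyp_num l a d * ((\<Prod>k=1..l. fps_const (of_nat (a k) ^ a k)) * ((\<Prod>k=1..l. fps_X + fps_const (of_nat (Suc d)))
         * (\<Prod>k=1..l. \<Prod>r\<in>{1..<a k}. fps_X + fps_const (of_nat d + of_nat r / of_nat (a k)))))"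
    by (simp only: prod.distrib hyp_num_def)
  also have "(\<Prod>k=1..l. fps_const (of_nat (a k) ^ a k)) = fps_const (of_nat (aa l a))"
    by (simp add: aa_def fps_const_prod)
  also have "(\<Prod>k=1..l. fps_X + fps_const (of_nat (Suc d))) = (fps_X + fps_const (of_nat (Suc d)))^l"
    by simp
  also have "(\<Prod>k=1..l. \<Prod>r\<in>{1..<a k}. fps_X + fps_const (of_nat d + of_nat r / of_nat (a k)))
      = (\<Prod>c\<leftarrow>hyp_shifts l a. fps_X + fps_const (of_nat d + c))"
    by (simp add: prod_hyp_shifts)
  finally show ?thesis .
qed

lemma hyp_den_Suc: "hyp_den n (Suc d) = hyp_den n d * (fps_X + fps_const (of_nat (Suc d)))^n"
  unfolding hyp_den_def by (subst prod.nat_ivl_Suc') (simp_all add: mult.commute)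

lemma tildeF_recurrence:
  assumes "\<And>j. j \<in> {1..l} \<Longrightarrow> a j \<ge> 1" and kl: "k + l = n"
  shows "(fps_X + of_nat (Suc d))^k * tildeF l a n $ Suc d
     = fps_const (of_nat (aa l a)) * (\<Prod>c\<leftarrow>hyp_shifts l a. fps_X + fps_const (of_nat d + c)) * tildeF l a n $ d"
proof -
  define Y :: "rat fps" where "Y = fps_X + fps_const (of_nat (Suc d))"
  define C :: "rat fps" where "C = fps_const (of_nat (aa l a))"
  define Q where "Q = (\<Prod>c\<leftarrow>hyp_shifts l a. fps_X + fps_const (of_nat d + c))"
  have Y0: "(Y ^ n) $ 0 \<noteq> 0" by (simp add: Y_def fps_nth_power_0)
  have YY: "Y ^ n * inverse (Y ^ n) = 1" using Y0 by (rule inverse_mult_eq_1')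
  have n1: "tildeF l a n $ Suc d = hyp_num l a d * (C * (Y^l * Q)) * (inverse (hyp_den n d) * inverse (Y^n))"
  proof -
    have NS: "hyp_num l a (Suc d) = hyp_num l a d * (C * (Y^l * Q))"
      unfolding C_def Y_def Q_def by (rule hyp_num_Suc) (rule assms)
    have DS: "hyp_den n (Suc d) = hyp_den n d * Y^n" unfolding Y_def by (rule hyp_den_Suc)
    show ?thesis by (simp only: tildeF_nth NS DS fps_inverse_mult)
  qed
  have y: "(fps_X + of_nat (Suc d) :: rat fps) = Y" unfolding Y_def fps_of_nat ..
  have "(fps_X + of_nat (Suc d))^k * tildeF l a n $ Suc d
      = Y^k * (hyp_num l a d * (C * (Y^l * Q)) * (inverse (hyp_den n d) * inverse (Y^n)))"
    unfolding n1 y ..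
  also have "\<dots> = C * Q * (hyp_num l a d * inverse (hyp_den n d)) * (Y ^ n * inverse (Y ^ n))"
    by (simp add: kl[symmetric] power_add mult_ac)
  also have "\<dots> = C * Q * tildeF l a n $ d" by (simp add: YY tildeF_nth)
  finally show ?thesis by (simp add: C_def Q_def)
qed

lemma hyp_op_tildeF:
  assumes "\<And>j. j \<in> {1..l} \<Longrightarrow> a j \<ge> 1" and kl: "length (hyp_shifts l a) + l = n"
  shows "hyp_op (hyp_shifts l a) (of_nat (aa l a)) (tildeF l a n) = wvar ^ length (hyp_shifts l a)"
proof (rule fps_ext)
  fix d
  let ?k = "length (hyp_shifts l a)"
  show "hyp_op (hyp_shifts l a) (of_nat (aa l a)) (tildeF l a n) $ d = wvar ^ ?k $ d"
  proof (cases d)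
    case 0
    then show ?thesis
      by (simp add: hyp_op_def funpow_theta_nth liftq_const_mult_X mult.assoc tildeF_nth_0 wvar_def)
  next
    case (Suc d')
    have "hyp_op (hyp_shifts l a) (of_nat (aa l a)) (tildeF l a n) $ d
        = (fps_X + of_nat (Suc d'))^?k * tildeF l a n $ Suc d'
          - fps_const (of_nat (aa l a)) * ((\<Prod>c\<leftarrow>hyp_shifts l a. fps_X + fps_const (of_nat d' + c)) * tildeF l a n $ d')"
      by (simp add: Suc hyp_op_def funpow_theta_nth liftq_const_mult_X mult.assoc shifted_theta_prod_def)
    also have "\<dots> = 0" using tildeF_recurrence[OF assms(1) kl, where d=d'] by (simp add: mult.assoc)
    finally show ?thesis by (simp add: Suc wvar_def)
  qed
qed

lemma prod_hyp_shifts_reflect: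
  assumes "\<And>j. j \<in> {1..l} \<Longrightarrow> a j \<ge> 1"
  shows "(\<Prod>c\<leftarrow>hyp_shifts l a. x + c) = (\<Prod>c\<leftarrow>hyp_shifts l a. x + 1 - c)"
proof -
  have "(\<Prod>r\<in>{1..<a j}. x + of_nat r / of_nat (a j)) = (\<Prod>r\<in>{1..<a j}. x + 1 - of_nat r / of_nat (a j))"
    if j: "j \<in> {1..l}" for j
  proof -
    have aj: "a j \<ge> 1" using assms j by auto
    have pt: "x + 1 - of_nat (a j - r) / of_nat (a j) = x + of_nat r / of_nat (a j)"
      if r: "r \<in> {1..<a j}" for r
    proof -
      have "(of_nat (a j - r) :: rat) = of_nat (a j) - of_nat r" using r by (simp add: of_nat_diff)
      moreover have "(of_nat (a j)::rat) \<noteq> 0" using aj by simp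
      ultimately show ?thesis by (simp add: field_simps)
    qed
    show ?thesis
    proof (rule prod.reindex_bij_witness[where i="\<lambda>r. a j - r" and j="\<lambda>r. a j - r"])
      fix r assume "r \<in> {1..<a j}"
      then show "x + 1 - of_nat (a j - r) / of_nat (a j) = x + of_nat r / of_nat (a j)" by (rule pt)
    qed auto
  qed
  then show ?thesis by (simp add: prod_hyp_shifts)
qed

section \<open>Square roots of (1 - A q)^{-k}\<close>

lemma fps_eq_if_square_eq:
  fixes x y :: "rat fps"
  assumes "x ^ 2 = y ^ 2" and "x $ 0 = 1" and "y $ 0 = 1"
  shows "x = y"
proof -
  have "(x - y) * (x + y) = 0" using assms(1) by (simp add: algebra_simps power2_eq_square)
  moreover have "x + y \<noteq> 0"
  proof
    assume "x + y = 0"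
    then have "(x + y) $ 0 = 0" by simp
    then show False using assms(2,3) by simp
  qed
  ultimately show ?thesis by simp
qed

lemma fps_binomial_neg_half_square:
  "(fps_binomial (- of_nat k / 2) oo (- fps_const A * fps_X)) ^ 2
     = inverse (1 - fps_const (A :: rat) * fps_X) ^ k"
proof -
  define Z :: "rat fps" where "Z = - fps_const A * fps_X"
  have Z0: "Z $ 0 = 0" by (simp add: Z_def)
  have "(fps_binomial (- of_nat k / 2) oo Z) ^ 2 = fps_binomial (- of_nat k / 2) ^ 2 oo Z"
    by (rule fps_compose_power[OF Z0])
  also have "fps_binomial (- of_nat k / 2 :: rat) ^ 2 = inverse ((1 + fps_X) ^ k)"
    by (simp add: fps_binomial_power fps_binomial_minus_of_nat)
  also have "inverse ((1 + fps_X) ^ k) oo Z = inverse (((1 + fps_X) oo Z) ^ k)"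
    using Z0 by (simp add: fps_inverse_compose fps_compose_power fps_nth_power_0)
  also have "(1 + fps_X) oo Z = 1 + Z"
    using Z0 by (simp add: fps_compose_add_distrib)
  also have "1 + Z = 1 - fps_const A * fps_X"
    unfolding Z_def by (simp only: mult_minus_left diff_conv_add_uminus)
  finally show ?thesis by (simp add: Z_def fps_inverse_power)
qed

section \<open>The iterates of M for a hypergeometric series\<close>

locale hypergeometric_solution =
  fixes F :: "rat fps fps" and cs :: "rat list" and A :: rat and k :: nat
  assumes F_nth_0: "F $ 0 = 1"
    and length_cs: "length cs = k"
    and hyp_op_F: "hyp_op cs A F = wvar ^ k"
    and cs_reflect: "\<And>x. (\<Prod>c\<leftarrow>cs. x + c) = (\<Prod>c\<leftarrow>cs. x + 1 - c)"
begin

definition Miter :: "nat \<Rightarrow> rat fps fps" where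
  "Miter p = (opM ^^ p) F"

definition I :: "nat \<Rightarrow> rat fps" where
  "I p = at_w0 (Miter p)"

lemma Miter_nth_0: "Miter p $ 0 = 1"
  by (induction p) (simp_all add: Miter_def F_nth_0 opM_nth_0)

lemma I_nth_0: "I p $ 0 = 1"
  by (simp add: I_def Miter_nth_0)

lemma normalized_Miter_eq: "normalized (Miter p) = Miter p * liftq (inverse (I p))"
  by (simp add: normalized_def I_def)

lemma factored_op_I: "factored_op I j F = wvar ^ j * normalized (Miter j)"
proof (induction j)
  case 0
  show ?case unfolding normalized_Miter_eq by (simp add: Miter_def mult.commute)
next
  case (Suc j)
  have "theta (normalized (Miter j)) = wvar * Miter (Suc j)"
    using wvar_mult_opM[OF Miter_nth_0, of j] by (simp add: Miter_def)
  then have "factored_op I (Suc j) F = liftq (inverse (I (Suc j))) * (wvar ^ j * (wvar * Miter (Suc j)))"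
    by (simp add: Suc theta_wvar_power_mult)
  also have "\<dots> = wvar ^ Suc j * normalized (Miter (Suc j))"
    by (simp add: normalized_Miter_eq mult_ac)
  finally show ?case .
qed

text \<open>Both operators map F to w^k times a series; after cross-multiplying the leading
  coefficients their difference has order below k, so it vanishes.\<close>

lemma factored_op_hyp_op_proportional:
  assumes b: "theta_coeffs b k (factored_op I k) (factored_op_at I k)" and b_top: "b k = \<kappa>"
    and c: "theta_coeffs c k (hyp_op cs A) (hyp_op_at cs A)" and c_top: "c k = \<mu>"
  shows "\<mu> * b i = \<kappa> * c i" and "liftq \<mu> * normalized (Miter k) = liftq \<kappa>"
proof -
  define \<beta> where "\<beta> i = \<mu> * b i - \<kappa> * c i" for i
  have "theta_coeffs \<beta> k (\<lambda>H. liftq \<mu> * factored_op I k H - liftq \<kappa> * hyp_op cs A H)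
      (\<lambda>s g. \<mu> * factored_op_at I k s g - \<kappa> * hyp_op_at cs A s g)"
    unfolding \<beta>_def by (rule theta_coeffs_diff[OF theta_coeffs_mult[OF b] theta_coeffs_mult[OF c]])
  then have "theta_poly \<beta> k F = liftq \<mu> * factored_op I k F - liftq \<kappa> * hyp_op cs A F"
    by (simp only: theta_coeffs_def)
  then have \<beta>F: "theta_poly \<beta> k F = wvar ^ k * (liftq \<mu> * normalized (Miter k) - liftq \<kappa>)"
    by (simp add: factored_op_I hyp_op_F algebra_simps)
  have \<beta>0: "\<beta> i = 0" for i
  proof (rule low_order_theta_poly_eq_0[OF F_nth_0])
    show "\<beta> i = 0" if "k \<le> i" for i
      using that b c b_top c_top by (cases "i = k") (auto simp: \<beta>_def theta_coeffs_def)
    show "theta_poly \<beta> k F $ d $ j = 0" if "j < k" for d j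
      using that by (simp add: \<beta>F wvar_power_mult_nth_low)
  qed
  then show "\<mu> * b i = \<kappa> * c i" by (simp add: \<beta>_def)
  from \<beta>0 have "wvar ^ k * (liftq \<mu> * normalized (Miter k) - liftq \<kappa>) = 0"
    by (simp flip: \<beta>F add: theta_poly_def)
  then show "liftq \<mu> * normalized (Miter k) = liftq \<kappa>" by (simp add: wvar_def)
qed

lemma factorization:
  shows factored_op_at_I: "factored_op_at I k = hyp_op_at cs A"
    and normalized_Miter_k: "normalized (Miter k) = 1"
    and prod_inverse_I: "(\<Prod>p\<le>k. inverse (I p)) = 1 - fps_const A * fps_X"
proof -
  define \<mu> where "\<mu> = 1 - fps_const A * fps_X"
  define \<kappa> where "\<kappa> = (\<Prod>p\<le>k. inverse (I p))"
  obtain b where b: "theta_coeffs b k (factored_op I k) (factored_op_at I k)" and "b k = \<kappa>"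
    using theta_coeffs_factored_op \<kappa>_def by blast
  moreover obtain c where c: "theta_coeffs c k (hyp_op cs A) (hyp_op_at cs A)" and "c k = \<mu>"
    using theta_coeffs_hyp_op[of cs A] length_cs \<mu>_def by blast
  ultimately have bc: "\<And>i. \<mu> * b i = \<kappa> * c i"
    and LG: "liftq \<mu> * normalized (Miter k) = liftq \<kappa>"
    using factored_op_hyp_op_proportional by blast+
  have "at_w0 (normalized (Miter k)) = 1" by (rule at_w0_normalized) (simp add: Miter_nth_0)
  with arg_cong[OF LG, of at_w0] have \<kappa>\<mu>: "\<kappa> = \<mu>" by (simp add: at_w0_mult)
  then show "(\<Prod>p\<le>k. inverse (I p)) = 1 - fps_const A * fps_X" by (simp add: \<kappa>_def \<mu>_def)
  have \<mu>0: "\<mu> \<noteq> 0"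
  proof
    assume "\<mu> = 0"
    then have "\<mu> $ 0 = 0" by simp
    then show False by (simp add: \<mu>_def)
  qed
  from LG \<kappa>\<mu> \<mu>0 show "normalized (Miter k) = 1" by (simp flip: liftq_1 liftq_mult)
  from bc \<kappa>\<mu> \<mu>0 have "b = c" by (simp add: fun_eq_iff)
  with b c show "factored_op_at I k = hyp_op_at cs A"
    unfolding theta_coeffs_def by (auto simp: fun_eq_iff)
qed

lemma I_eq_1:
  assumes "k < p"
  shows "I p = 1"
proof -
  have "Miter (Suc k + j) = 1" for j
  proof (induction j)
    case 0
    show ?case using opM_eq_1[OF normalized_Miter_k] by (simp add: Miter_def)
  next
    case (Suc j)
    then show ?case using opM_eq_1[of 1] by (simp add: Miter_def normalized_def)
  qed
  moreover obtain j where "p = Suc k + j" using assms by (auto simp: less_iff_Suc_add)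
  ultimately show "I p = 1" by (simp add: I_def)
qed

lemma prod_I: "(\<Prod>p=0..k. I p) = inverse (1 - fps_const A * fps_X)"
proof -
  have "(\<Prod>p=0..k. I p) $ 0 \<noteq> 0" by (simp add: fps_prod_nth_0 I_nth_0)
  then have "(\<Prod>p=0..k. I p) = inverse (inverse (\<Prod>p=0..k. I p))"
    by (simp add: fps_inverse_idempotent)
  also have "inverse (\<Prod>p=0..k. I p) = 1 - fps_const A * fps_X"
    by (simp add: inverse_prod_fps atLeast0AtMost prod_inverse_I)
  finally show ?thesis .
qed

text \<open>Reversing the order of the factors of L = factored_op_at I k gives its adjoint, which
  is L up to sign because the shifts cs are symmetric under c \<mapsto> 1 - c.\<close>

lemma factored_op_at_reversed: "factored_op_at (\<lambda>p. I (k - p)) k = factored_op_at I k"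
proof -
  have agree: "factored_op_at (\<lambda>p. I (k - p)) k (- of_nat N) 1 $ d = factored_op_at I k (- of_nat N) 1 $ d"
    if "d \<le> N" for N d
  proof -
    define f :: "rat fps" where "f = fps_X ^ (N - d)"
    have "(-1) ^ k * pairing N f (factored_op_at (\<lambda>p. I (k - p)) k (- of_nat N) 1)
        = pairing N (hyp_op_at cs A 0 f) 1"
      using pairing_factored_op_at[of N I k 0 f 1] by (simp add: factored_op_at_I)
    also have "\<dots> = (-1) ^ k * pairing N f (factored_op_at I k (- of_nat N) 1)"
      using pairing_hyp_op_at[OF cs_reflect, of N A 0 f 1] by (simp add: length_cs factored_op_at_I)
    finally show ?thesis using that by (simp add: f_def pairing_fps_X_power)
  qed
  obtain b b' where "theta_coeffs b k (factored_op (\<lambda>p. I (k - p)) k) (factored_op_at (\<lambda>p. I (k - p)) k)"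
    and "theta_coeffs b' k (factored_op I k) (factored_op_at I k)"
    using theta_coeffs_factored_op by blast
  moreover have "infinite ((\<lambda>N. - of_nat N :: rat) ` {d..})" for d
    by (simp add: finite_image_iff inj_on_def infinite_Ici)
  ultimately show ?thesis
    by (rule theta_coeffs_eq_if_agree_at_1) (auto intro: agree)
qed

lemma I_reflect: "p \<le> k \<Longrightarrow> I (k - p) = I p"
  using factored_op_at_inj[OF _ _ factored_op_at_reversed] by (simp add: I_nth_0)

lemma weighted_prod_I:
  "(\<Prod>p=0..k. I p ^ (k - p)) = fps_binomial (- of_nat k / 2) oo (- fps_const A * fps_X)"
proof (rule fps_eq_if_square_eq)
  have "(\<Prod>p=0..k. I p ^ (k - p)) = (\<Prod>p=0..k. I p ^ p)"
    by (subst prod.atLeastAtMost_rev) (auto intro!: prod.cong simp: I_reflect)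
  then have "(\<Prod>p=0..k. I p ^ (k - p)) ^ 2 = (\<Prod>p=0..k. I p ^ (k - p)) * (\<Prod>p=0..k. I p ^ p)"
    by (simp add: power2_eq_square)
  also have "\<dots> = (\<Prod>p=0..k. I p) ^ k"
    by (simp add: prod_power_distrib flip: prod.distrib power_add)
  also have "\<dots> = (fps_binomial (- of_nat k / 2) oo (- fps_const A * fps_X)) ^ 2"
    unfolding prod_I by (rule fps_binomial_neg_half_square[symmetric])
  finally show "(\<Prod>p=0..k. I p ^ (k - p)) ^ 2 = (fps_binomial (- of_nat k / 2) oo (- fps_const A * fps_X)) ^ 2" .
qed (simp_all add: fps_prod_nth_0 fps_nth_power_0 I_nth_0)

end

theorem proposition4p4:
  fixes n l :: nat and a :: "nat \<Rightarrow> nat"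
  assumes "n \<ge> 2" and "l \<ge> 1"
    and "\<And>k. k \<in> {1..l} \<Longrightarrow> a k \<ge> 2"
    and "(\<Sum>k=1..l. a k) = n"
  shows "(\<forall>p. n - l + 1 \<le> p \<and> p \<le> n - 1 \<longrightarrow> Iser l a n p = 1)
    \<and> (\<forall>p. p \<le> n - l \<longrightarrow> Iser l a n p = Iser l a n (n - l - p))
    \<and> (\<Prod>p=0..n-l. Iser l a n p) = inverse (1 - fps_const (of_nat (aa l a)) * fps_X)
    \<and> (\<Prod>p=0..n-l. Iser l a n p ^ (n - l - p))
        = fps_binomial (- of_nat (n - l) / 2) oo (- fps_const (of_nat (aa l a)) * fps_X)"
proof -
  have a_pos: "\<And>j. j \<in> {1..l} \<Longrightarrow> a j \<ge> 1"
    using assms(3) by fastforce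
  have length: "length (hyp_shifts l a) + l = n"
    using length_hyp_shifts[OF a_pos] assms(4) by simp
  then have k: "length (hyp_shifts l a) = n - l" by simp
  interpret hypergeometric_solution "tildeF l a n" "hyp_shifts l a" "of_nat (aa l a)" "n - l"
    using tildeF_nth_0 k hyp_op_tildeF[OF a_pos length] prod_hyp_shifts_reflect[OF a_pos]
    by unfold_locales simp_all
  have Iser_eq: "Iser l a n p = I p" for p
    by (simp add: Iser_def I_def Miter_def)
  show ?thesis
    unfolding Iser_eq using I_eq_1 I_reflect prod_I weighted_prod_I by auto
qed

end
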